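(* For every $c>1$, \[\Delta\theta_{MN}(c):=\int_{\sin^{-1}(1/c)}^{\pi-\sin^{-1}(1/c)}\frac{d\psi}{1-[R^-(c\sin\psi)]^2}<\pi.\]
   Context: Let $K(R)=\frac{\exp(\frac{R^2-1}{2})}{R}$ for $R>0$ (strictly decreasing on $(0,1]$ with $K(1)=1$). For $s\ge1$ let $R^-(s)\in(0,1]$ be the solution of $K(R)=s$ in $(0,1]$. The integral is the change of polar angle along the shrinking curve with energy $c$ (satisfying $K(R)=c\sin\psi$) between its two points with $R=1$, traversed through the part where $R<1$. *)

theory Defs
  imports "HOL-Analysis.Analysis"
begin

definition K :: "real \<Rightarrow> real" where
  "K R = exp ((R^2 - 1) / 2) / R"

text \<open>For s \<ge> 1, Rminus s is the unique solution R \<in> (0,1] of K R = s.\<close>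
definition Rminus :: "real \<Rightarrow> real" where
  "Rminus s = (THE R. 0 < R \<and> R \<le> 1 \<and> K R = s)"

definition DeltaTheta_MN :: "real \<Rightarrow> real" where
  "DeltaTheta_MN c = integral {arcsin (1/c) .. pi - arcsin (1/c)}
      (\<lambda>\<psi>. 1 / (1 - (Rminus (c * sin \<psi>))^2))"

end

theory Submission
  imports Defs
begin

(* Put y = 1 - R^2 with R = R^-(s). Since K(R) = s, one has s^2 (1 - y) e^y = 1, and an
   elementary polynomial bound on 1 - (1 - y) e^y turns this into
     1 / (1 - R^-(s)^2) \<le> 1 + (43/100 + 3/10 s^-2) / (s sqrt (s^2 - 1))   for s > 1.
   For s = c sin \<psi> this majorant has an elementary antiderivative, and its integral over
   [a, \<pi> - a], a = arcsin (1/c), is \<pi> - 2a + \<pi> (58/100 c^-1 + 15/100 c^-3).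
   The excess over \<pi> - 2a is less than 2a because arcsin x \<ge> x + x^3/6. *)

lemma one_minus_mult_exp_le:
  fixes y :: real
  assumes y0: "0 < y" and y1: "y < 1"
  shows "1 - (1 - y) * exp y \<le> y^2 * (exp y * (43/100 + 3/10 * (1 - y) * exp y))^2"
proof -
  define u where "u = exp y"
  define P where "P = 1 + y + y^2/2"
  define Q where "Q = 361/500 + 29/100 * y"
  have uP: "P \<le> u" unfolding P_def u_def using y0 by (intro exp_lower_Taylor_quadratic) simp
  have P0: "0 \<le> P" using y0 P_def by simp
  \<comment> \<open>The linear function Q separates the two sides: (1 + y)/2 \<le> Q^2 and
      Q \<le> P (43/100 + 3/10 (1 - y) P) on (0,1).\<close>
  have "1 - (1 - y) * u \<le> 1 - (1 - y) * P" using uP y1 by (simp add: mult_left_mono)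
  also have "\<dots> = y^2 * (1/2 + y/2)" unfolding P_def power2_eq_square by (simp add: field_simps)
  also have "\<dots> \<le> y^2 * Q^2"
  proof -
    have "Q^2 - (1/2 + y/2) = 841/10000 * (y - 2031/4205)^2 + 7/4205"
      unfolding Q_def power2_eq_square by (simp add: field_simps)
    moreover have "0 \<le> (y - 2031/4205)^2" by simp
    ultimately have "1/2 + y/2 \<le> Q^2" by linarith
    then show ?thesis by (simp add: mult_left_mono)
  qed
  also have "\<dots> \<le> y^2 * (u * (43/100 + 3/10 * (1 - y) * u))^2"
  proof -
    have decreasing: "y^2 \<le> y^1" "y^3 \<le> y^2" "y^4 \<le> y^3" "y^5 \<le> y^4"
      using y0 y1 by (intro power_decreasing; simp)+
    have "P * (43/100 + 3/10 * (1 - y) * P) - Q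
        = 8/1000 + 44/100*y + 215/1000*y^2 - 3/10*y^3 - 225/1000*y^4 - 75/1000*y^5"
      unfolding P_def Q_def by (simp add: field_simps eval_nat_numeral)
    then have "Q \<le> P * (43/100 + 3/10 * (1 - y) * P)" using decreasing y0 unfolding power_one_right by linarith
    also have "\<dots> \<le> u * (43/100 + 3/10 * (1 - y) * u)"
      using uP P0 y1 by (intro mult_mono add_mono) auto
    finally have "Q^2 \<le> (u * (43/100 + 3/10 * (1 - y) * u))^2"
      using y0 Q_def by (intro power_mono) auto
    then show ?thesis by (simp add: mult_left_mono)
  qed
  finally show ?thesis unfolding u_def .
qed

lemma K_1 [simp]: "K 1 = 1"
  by (simp add: K_def)

lemma isCont_K: "0 < R \<Longrightarrow> isCont K R"
  unfolding K_def[abs_def] by (intro continuous_intros) auto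

lemma K_sq_eq:
  assumes "0 < R"
  shows "R^2 * exp (1 - R^2) * (K R)^2 = 1"
proof -
  have "exp ((R^2 - 1)/2)^2 = exp (R^2 - 1)" by (simp flip: exp_double)
  then show ?thesis using assms by (simp add: K_def power_divide flip: exp_add)
qed

lemma K_strict_antimono:
  assumes x: "0 < x" and xy: "x < y" and y1: "y \<le> 1"
  shows "K y < K x"
proof -
  have y: "0 < y" using x xy by simp
  have "1 - x/y \<le> ln (y/x)" using ln_le_minus_one[of "x/y"] x y by (simp add: ln_div)
  moreover have "y - x \<le> 1 - x/y"
  proof -
    have "0 \<le> (y - x) * (1 - y)" using xy y1 by simp
    then show ?thesis using y by (simp add: field_simps algebra_simps)
  qed
  moreover have "(y^2 - x^2)/2 < y - x"
  proof -
    have "(y^2 - x^2)/2 = (y - x) * ((y + x)/2)" by (simp add: power2_eq_square field_simps)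
    also have "\<dots> < (y - x) * 1" using x xy y1 by (intro mult_strict_left_mono) auto
    finally show ?thesis by simp
  qed
  ultimately have "(y^2 - x^2)/2 < ln (y/x)" by linarith
  then have "exp ((y^2 - x^2)/2) < y/x" using x y by (metis exp_less_cancel_iff exp_ln divide_pos_pos)
  moreover have "exp ((y^2 - 1)/2) = exp ((y^2 - x^2)/2) * exp ((x^2 - 1)/2)"
    by (simp add: exp_add[symmetric] field_simps)
  ultimately have "exp ((y^2 - 1)/2) < y/x * exp ((x^2 - 1)/2)"
    by (metis exp_gt_zero mult_strict_right_mono)
  then show ?thesis using x y unfolding K_def by (simp add: field_simps)
qed

lemma K_inj_on: "inj_on K {0<..1}"
  by (rule inj_onI) (metis K_strict_antimono greaterThanAtMost_iff linorder_neqE_linordered_idom less_irrefl)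

lemma K_surj:
  assumes s: "1 \<le> s"
  shows "\<exists>R. 0 < R \<and> R \<le> 1 \<and> K R = s"
proof -
  \<comment> \<open>K R \<ge> e^(-1/2)/R, so K r \<ge> s for r = e^(-1/2)/s.\<close>
  define r where "r = exp (-1/2) / s"
  have r0: "0 < r" using s r_def by simp
  have "exp (-1/2::real) < 1" by simp
  then have "exp (-1/2) \<le> s" using s by linarith
  then have r1: "r \<le> 1" using s r_def by (simp add: divide_le_eq)
  have "exp (-1/2) \<le> exp ((r^2 - 1)/2)" by simp
  then have "s \<le> K r" using r0 s unfolding K_def r_def by (simp add: field_simps)
  then obtain R where "r \<le> R" "R \<le> 1" "K R = s"
    using IVT2[of K 1 s r] r1 r0 s isCont_K by force
  then show ?thesis using r0 by (auto intro!: exI[of _ R])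
qed

lemma Rminus:
  assumes "1 \<le> s"
  shows "0 < Rminus s" "Rminus s \<le> 1" "K (Rminus s) = s"
proof -
  obtain R where R: "0 < R \<and> R \<le> 1 \<and> K R = s" using K_surj assms by blast
  have "0 < Rminus s \<and> Rminus s \<le> 1 \<and> K (Rminus s) = s"
    unfolding Rminus_def by (rule theI[of _ R]) (use R inj_onD[OF K_inj_on] in auto)
  then show "0 < Rminus s" "Rminus s \<le> 1" "K (Rminus s) = s" by auto
qed

lemma Rminus_K:
  assumes "0 < R" "R \<le> 1"
  shows "Rminus (K R) = R"
proof -
  have "1 \<le> K R" using K_strict_antimono[of R 1] assms by (cases "R = 1") auto
  then show ?thesis using Rminus[of "K R"] inj_onD[OF K_inj_on] assms by auto
qed

lemma Rminus_less_1: "1 < s \<Longrightarrow> Rminus s < 1"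
  using Rminus[of s] by (metis K_1 order.order_iff_strict order.strict_implies_order)

lemma isCont_Rminus:
  assumes s: "1 < s"
  shows "isCont Rminus s"
proof -
  define x where "x = Rminus s"
  have x0: "0 < x" and x1: "x < 1" and Kx: "K x = s"
    using Rminus[of s] Rminus_less_1[OF s] s x_def by auto
  define d where "d = min (x/2) ((1 - x)/2)"
  have d: "0 < d" using x0 x1 d_def by simp
  have near_x: "0 < z \<and> z \<le> 1" if "\<bar>z - x\<bar> \<le> d" for z
  proof -
    have "z - x \<le> d" "x - z \<le> d" using that by (auto simp: abs_le_iff)
    moreover have "d \<le> x/2" "d \<le> (1 - x)/2" unfolding d_def by (rule min.cobounded1, rule min.cobounded2)
    ultimately show ?thesis using x0 x1 by auto
  qed
  have "isCont Rminus (K x)"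
    by (rule isCont_inverse_function[OF d]) (auto dest: near_x intro!: Rminus_K isCont_K)
  then show ?thesis using Kx by simp
qed

definition majorant :: "real \<Rightarrow> real" where
  "majorant s = 1 + (43/100 + 3/10 / s^2) / (s * sqrt (s^2 - 1))"

lemma inverse_le_majorant:
  assumes y0: "0 < y" and y1: "y < 1" and s: "1 < s" and eq: "(1 - y) * exp y * s^2 = 1"
  shows "1 / y \<le> majorant s"
proof -
  define u where "u = exp y"
  define A where "A = 43/100 + 3/10 / s^2"
  define D where "D = s * sqrt (s^2 - 1)"
  have s2: "1 < s^2" using s by (simp add: one_less_power)
  have D0: "0 < D" using s s2 D_def by simp
  have A0: "0 < A" unfolding A_def by (intro add_pos_nonneg) auto
  have eq': "(1 - y) * u * s^2 = 1" using eq unfolding u_def .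
  have inv_s2: "1 / s^2 = (1 - y) * u" using eq' s by (simp add: field_simps)
  have "((1 - y) * D)^2 * u^2 = ((1 - y) * u * s^2) * ((1 - y) * u * (s^2 - 1))"
    using s2 by (simp add: D_def power_mult_distrib power2_eq_square)
  also have "\<dots> = 1 - (1 - y) * u" unfolding right_diff_distrib eq' by simp
  also have "\<dots> \<le> y^2 * (u * (43/100 + 3/10 * (1 - y) * u))^2"
    using one_minus_mult_exp_le[OF y0 y1] by (simp add: u_def)
  also have "\<dots> = (y * A)^2 * u^2"
  proof -
    have "A = 43/100 + 3/10 * (1 / s^2)" by (simp add: A_def)
    then have Au: "u * (43/100 + 3/10 * (1 - y) * u) = A * u" unfolding inv_s2 by (simp add: algebra_simps)
    have "y^2 * (u * (43/100 + 3/10 * (1 - y) * u))^2 = y^2 * (A * u)^2" unfolding Au ..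
    also have "\<dots> = (y * A)^2 * u^2" by (simp add: power_mult_distrib)
    finally show ?thesis .
  qed
  finally have "((1 - y) * D)^2 \<le> (y * A)^2" by (simp add: u_def)
  then have "(1 - y) * D \<le> y * A" by (rule power2_le_imp_le) (use y0 A0 in simp)
  then have "(1 - y) / y \<le> A / D" using y0 D0 by (simp add: divide_simps mult.commute)
  moreover have "1 / y = 1 + (1 - y) / y" using y0 by (simp add: diff_divide_distrib)
  ultimately show ?thesis by (simp add: majorant_def A_def D_def)
qed

lemma Rminus_le_majorant:
  assumes s: "1 < s"
  shows "0 < 1 / (1 - (Rminus s)^2)" and "1 / (1 - (Rminus s)^2) \<le> majorant s"
proof -
  have R0: "0 < Rminus s" and R1: "Rminus s < 1" and KR: "K (Rminus s) = s"
    using Rminus[of s] Rminus_less_1[OF s] s by auto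
  have y0: "0 < 1 - (Rminus s)^2" using R0 R1 by (simp add: power_less_one_iff)
  then show "0 < 1 / (1 - (Rminus s)^2)" by simp
  have "(1 - (1 - (Rminus s)^2)) * exp (1 - (Rminus s)^2) * s^2 = 1"
    using K_sq_eq[OF R0] KR by simp
  then show "1 / (1 - (Rminus s)^2) \<le> majorant s"
    using inverse_le_majorant[OF y0 _ s] R0 by simp
qed

lemma isCont_DeltaTheta_integrand:
  assumes s: "1 < s"
  shows "isCont (\<lambda>s. 1 / (1 - (Rminus s)^2)) s"
proof -
  have "(Rminus s)^2 < 1"
    using Rminus[of s] Rminus_less_1[OF s] s by (simp add: power_less_one_iff)
  then show ?thesis by (intro continuous_intros isCont_Rminus[OF s]) simp
qed

lemma arcsin_lower_bound:
  fixes x :: real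
  assumes x0: "0 \<le> x" and x1: "x < 1"
  shows "x + x^3/6 \<le> arcsin x"
proof -
  define h where "h = (\<lambda>t::real. arcsin t - t - t^3/6)"
  have "h 0 \<le> h x"
  proof (rule DERIV_nonneg_imp_increasing_open[OF x0])
    fix t :: real
    assume t0: "0 < t" and t1: "t < x"
    have t: "-1 < t" "t < 1" using t0 t1 x1 by auto
    have D: "(h has_real_derivative inverse (sqrt (1 - t^2)) - 1 - t^2/2) (at t)"
      unfolding h_def
      by (rule DERIV_cong[OF DERIV_diff[OF DERIV_diff[OF DERIV_arcsin[OF t] DERIV_ident] DERIV_cdivide[OF DERIV_pow]]])
         (simp add: eval_nat_numeral)
    have "(1 - t^2) * (1 + t^2/2)^2 = 1 - 3/4 * t^4 - 1/4 * t^6"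
      by (simp add: field_simps power2_eq_square eval_nat_numeral)
    moreover have "0 \<le> t^4" "0 \<le> t^6" by (simp_all add: zero_le_even_power)
    ultimately have "(1 - t^2) * (1 + t^2/2)^2 \<le> 1" by linarith
    then have "sqrt ((1 - t^2) * (1 + t^2/2)^2) \<le> 1" by simp
    then have "sqrt (1 - t^2) * (1 + t^2/2) \<le> 1" by (simp add: real_sqrt_mult)
    then have "1 + t^2/2 \<le> inverse (sqrt (1 - t^2))"
      using t by (simp add: field_simps abs_square_less_1)
    then show "\<exists>y. (h has_real_derivative y) (at t) \<and> 0 \<le> y"
      using D by auto
  next
    show "continuous_on {0..x} h"
      unfolding h_def using x0 x1 by (intro continuous_intros) auto
  qed
  then show ?thesis by (simp add: h_def)
qed

lemma pi_mult_less_2_arcsin: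
  fixes x :: real
  assumes x0: "0 < x" and x1: "x < 1"
  shows "pi * (58/100 * x + 15/100 * x^3) < 2 * arcsin x"
proof -
  have x2: "0 \<le> x^2" "x^2 \<le> 1" using x0 x1 by (auto simp: power_le_one)
  have "pi * (58/100 + 15/100 * x^2) \<le> 3.1415926535899 * (58/100 + 15/100 * x^2)"
    using pi_approx(2) x2 by (intro mult_right_mono) auto
  also have "\<dots> < 2 + x^2/3" using x2 by simp
  finally have "x * (pi * (58/100 + 15/100 * x^2)) < x * (2 + x^2/3)"
    using x0 by simp
  also have "\<dots> \<le> 2 * arcsin x" using arcsin_lower_bound[of x] x0 x1 by (simp add: algebra_simps power3_eq_cube power2_eq_square)
  finally show ?thesis by (simp add: algebra_simps power3_eq_cube power2_eq_square)
qed

lemma sin_le_sin_between: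
  assumes "0 \<le> a" "a \<le> pi/2" "a \<le> x" "x \<le> pi - a"
  shows "sin a \<le> sin x"
proof (cases "x \<le> pi/2")
  case True
  then show ?thesis using assms by (subst sin_mono_le_eq) auto
next
  case False
  then have "sin a \<le> sin (pi - x)" using assms by (subst sin_mono_le_eq) auto
  then show ?thesis by simp
qed

lemma sin_less_sin_between:
  assumes "0 \<le> a" "a \<le> pi/2" "a < x" "x < pi - a"
  shows "sin a < sin x"
proof (cases "x \<le> pi/2")
  case True
  then show ?thesis using assms by (subst sin_mono_less_eq) auto
next
  case False
  then have "sin a < sin (pi - x)" using assms by (subst sin_mono_less_eq) auto
  then show ?thesis by simp
qed

lemma arcsin_inverse_bounds:
  assumes "1 < c"
  shows "0 < arcsin (1/c)" "arcsin (1/c) < pi/2" "sin (arcsin (1/c)) = 1/c"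
    "cos (arcsin (1/c)) = sqrt (c^2 - 1) / c"
proof -
  have x: "0 < 1/c" "1/c < 1" using assms by auto
  show "0 < arcsin (1/c)" using arcsin_less_arcsin[of 0 "1/c"] x by simp
  show "arcsin (1/c) < pi/2" using arcsin_lt_bounded[of "1/c"] x by linarith
  show "sin (arcsin (1/c)) = 1/c" using x by (intro sin_arcsin) linarith+
  have "cos (arcsin (1/c)) = sqrt (1 - (1/c)^2)" using x by (intro cos_arcsin) linarith+
  also have "1 - (1/c)^2 = (c^2 - 1) / c^2" using assms by (simp add: field_simps)
  finally show "cos (arcsin (1/c)) = sqrt (c^2 - 1) / c"
    using assms by (simp add: real_sqrt_divide)
qed

lemma one_le_mult_sin:
  assumes c: "1 < c" and "arcsin (1/c) \<le> \<psi>" "\<psi> \<le> pi - arcsin (1/c)"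
  shows "1 \<le> c * sin \<psi>"
  using sin_le_sin_between[of "arcsin (1/c)" \<psi>] arcsin_inverse_bounds[OF c] assms
  by (simp add: field_simps)

lemma one_less_mult_sin:
  assumes c: "1 < c" and "arcsin (1/c) < \<psi>" "\<psi> < pi - arcsin (1/c)"
  shows "1 < c * sin \<psi>"
  using sin_less_sin_between[of "arcsin (1/c)" \<psi>] arcsin_inverse_bounds[OF c] assms
  by (simp add: field_simps)

lemma DERIV_cos_mult_sqrt_div_sin2:
  fixes c x :: real
  assumes S0: "0 < sin x" and q0: "1 < (c * sin x)^2"
  shows "((\<lambda>x. cos x * sqrt ((c * sin x)^2 - 1) / (sin x)^2) has_real_derivative
          (2 - (1 + c^2) * (sin x)^2) / (sqrt ((c * sin x)^2 - 1) * (sin x)^3)) (at x)"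
proof -
  define q where "q = sqrt ((c * sin x)^2 - 1)"
  have qpos: "0 < q" using q0 q_def by simp
  have qq: "q^2 = (c * sin x)^2 - 1" using q0 q_def by simp
  have hq: "sqrt (c^2 * (sin x)^2 - 1) = q" by (simp add: q_def power_mult_distrib)
  have sc: "(sin x)^2 + (cos x)^2 = 1" by simp
  have h: "((\<lambda>x. (c * sin x)^2 - 1) has_real_derivative 2 * c^2 * sin x * cos x) (at x)"
    by (auto intro!: derivative_eq_intros simp: power2_eq_square)
  have hs: "((\<lambda>x. sqrt ((c * sin x)^2 - 1)) has_real_derivative c^2 * sin x * cos x / q) (at x)"
    using DERIV_chain2[OF DERIV_real_sqrt h] q0 q_def by (simp add: field_simps)
  show ?thesis
    unfolding q_def[symmetric]
    by (rule DERIV_cong[OF DERIV_divide[OF DERIV_mult[OF DERIV_cos hs] DERIV_power[OF DERIV_sin]]])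
       (use S0 qpos in \<open>simp_all add: field_simps\<close>, use qq sc hq in algebra)
qed

lemma DERIV_arccos_cos_div_sin:
  fixes c x :: real
  assumes c: "1 < c" and S0: "0 < sin x" and q0: "1 < (c * sin x)^2"
  shows "((\<lambda>x. arccos (cos x / (sin x * sqrt (c^2 - 1)))) has_real_derivative
          1 / (sin x * sqrt ((c * sin x)^2 - 1))) (at x)"
proof -
  define q where "q = sqrt ((c * sin x)^2 - 1)"
  define m where "m = sqrt (c^2 - 1)"
  define v where "v = cos x / (sin x * m)"
  have qpos: "0 < q" using q0 q_def by simp
  have qq: "q^2 = (c * sin x)^2 - 1" using q0 q_def by simp
  have mpos: "0 < m" using c m_def by (simp add: one_less_power)
  have mm: "m^2 = c^2 - 1" using c m_def by (simp add: one_less_power less_imp_le)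
  have sc: "(sin x)^2 + (cos x)^2 = 1" by simp
  have e1: "1 - v^2 = (q / (sin x * m))^2"
    unfolding v_def using S0 mpos qq mm
    by (simp add: field_simps power_mult_distrib) (use sc in algebra)
  have hv: "sqrt (1 - v^2) = q / (sin x * m)"
    using e1 qpos S0 mpos by (simp add: real_sqrt_unique)
  have "0 < 1 - v^2" using e1 qpos S0 mpos by simp
  then have "\<bar>v\<bar> < 1" by (simp add: abs_square_less_1)
  then have v1: "-1 < v" "v < 1" by auto
  have dv: "((\<lambda>x. cos x / (sin x * m)) has_real_derivative
        (- sin x * (sin x * m) - cos x * (cos x * m)) / ((sin x * m) * (sin x * m))) (at x)"
    using DERIV_divide[OF DERIV_cos DERIV_cmult_right[OF DERIV_sin, of m]] S0 mpos
    by (simp add: mult.commute)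
  show ?thesis
    unfolding m_def[symmetric] q_def[symmetric]
    by (rule DERIV_cong[OF DERIV_chain2[OF DERIV_arccos[OF v1[unfolded v_def]] dv]])
       (unfold v_def[symmetric] hv, use S0 mpos qpos in \<open>simp add: field_simps\<close>, use sc in algebra)
qed

definition majorant_antideriv :: "real \<Rightarrow> real \<Rightarrow> real" where
  "majorant_antideriv c \<psi> = \<psi>
     + (58/100 / c + 15/100 / c^3) * arccos (cos \<psi> / (sin \<psi> * sqrt (c^2 - 1)))
     + 3/20 / c^3 * (cos \<psi> * sqrt ((c * sin \<psi>)^2 - 1) / (sin \<psi>)^2)"

lemma DERIV_majorant_antideriv:
  assumes c: "1 < c" and s: "1 < c * sin \<psi>"
  shows "(majorant_antideriv c has_real_derivative majorant (c * sin \<psi>)) (at \<psi>)"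
proof -
  have S0: "0 < sin \<psi>" using c s by (smt (verit) mult_nonneg_nonpos)
  have q0: "1 < (c * sin \<psi>)^2" using s by (simp add: one_less_power)
  define q where "q = sqrt ((c * sin \<psi>)^2 - 1)"
  have qpos: "0 < q" using q0 q_def by simp
  have D: "(majorant_antideriv c has_real_derivative
             1 + (58/100 / c + 15/100 / c^3) * (1 / (sin \<psi> * q))
               + 3/20 / c^3 * ((2 - (1 + c^2) * (sin \<psi>)^2) / (q * (sin \<psi>)^3))) (at \<psi>)"
    unfolding majorant_antideriv_def[abs_def] q_def
    by (intro DERIV_add DERIV_cmult DERIV_ident DERIV_arccos_cos_div_sin[OF c S0 q0]
        DERIV_cos_mult_sqrt_div_sin2[OF S0 q0])
  have majorant_eq: "majorant (c * sin \<psi>) = 1 + (43/100 + 3/10 / (c * sin \<psi>)^2) / (c * sin \<psi> * q)"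
    by (simp add: majorant_def q_def)
  show ?thesis unfolding majorant_eq
    by (rule DERIV_cong[OF D])
       (use S0 qpos c in \<open>simp add: field_simps power2_eq_square power3_eq_cube\<close>)
qed

lemma continuous_on_majorant_antideriv:
  assumes c: "1 < c" and s: "\<And>\<psi>. \<psi> \<in> S \<Longrightarrow> 1 \<le> c * sin \<psi>"
  shows "continuous_on S (majorant_antideriv c)"
proof -
  define m where "m = sqrt (c^2 - 1)"
  have mpos: "0 < m" using c m_def by (simp add: one_less_power)
  have mm: "m^2 = c^2 - 1" using c m_def by (simp add: one_less_power less_imp_le)
  have sin_pos: "0 < sin \<psi>" if "\<psi> \<in> S" for \<psi>
    using s[OF that] c by (smt (verit) mult_nonneg_nonpos)
  have arccos_arg: "-1 \<le> cos \<psi> / (sin \<psi> * m) \<and> cos \<psi> / (sin \<psi> * m) \<le> 1"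
    if "\<psi> \<in> S" for \<psi>
  proof -
    have "(cos \<psi>)^2 = 1 - (sin \<psi>)^2" by (simp add: cos_squared_eq)
    also have "\<dots> \<le> (sin \<psi> * m)^2"
      using s[OF that] unfolding power_mult_distrib mm
      by (simp add: algebra_simps one_le_power flip: power_mult_distrib)
    finally have "(cos \<psi> / (sin \<psi> * m))^2 \<le> 1"
      using sin_pos[OF that] mpos by (simp add: power_divide divide_le_eq)
    then have "\<bar>cos \<psi> / (sin \<psi> * m)\<bar> \<le> 1" by (simp only: abs_square_le_1)
    then show ?thesis unfolding abs_le_iff by linarith
  qed
  show ?thesis
    unfolding majorant_antideriv_def[abs_def] m_def[symmetric] using sin_pos arccos_arg mpos
    by (intro continuous_intros) (auto simp: less_imp_neq[symmetric])
qed

lemma majorant_antideriv_endpoints: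
  assumes c: "1 < c"
  shows "majorant_antideriv c (arcsin (1/c)) = arcsin (1/c)"
    and "majorant_antideriv c (pi - arcsin (1/c))
           = pi - arcsin (1/c) + pi * (58/100 / c + 15/100 / c^3)"
proof -
  define a where "a = arcsin (1/c)"
  define m where "m = sqrt (c^2 - 1)"
  have mpos: "0 < m" using c m_def by (simp add: one_less_power)
  have sa: "sin a = 1/c" and ca: "cos a = m / c"
    using arcsin_inverse_bounds[OF c] unfolding a_def m_def by auto
  have arg: "cos a / (sin a * m) = 1" and root: "(c * sin a)^2 - 1 = 0"
    using sa ca mpos c by simp_all
  show "majorant_antideriv c (arcsin (1/c)) = arcsin (1/c)"
    unfolding a_def[symmetric] majorant_antideriv_def m_def[symmetric] arg root by simp
  have arg': "cos (pi - a) / (sin (pi - a) * m) = -1" and root': "(c * sin (pi - a))^2 - 1 = 0"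
    using sa ca mpos c by simp_all
  show "majorant_antideriv c (pi - arcsin (1/c))
          = pi - arcsin (1/c) + pi * (58/100 / c + 15/100 / c^3)"
    unfolding a_def[symmetric] majorant_antideriv_def m_def[symmetric] arg' root' by simp
qed

lemma majorant_has_integral:
  assumes c: "1 < c"
  shows "((\<lambda>\<psi>. majorant (c * sin \<psi>)) has_integral
           pi - 2 * arcsin (1/c) + pi * (58/100 / c + 15/100 / c^3))
         {arcsin (1/c) .. pi - arcsin (1/c)}"
proof -
  let ?a = "arcsin (1/c)"
  have "?a < pi/2" using arcsin_inverse_bounds[OF c] by simp
  moreover have "continuous_on {?a..pi - ?a} (majorant_antideriv c)"
    using one_le_mult_sin[OF c] by (intro continuous_on_majorant_antideriv[OF c]) auto
  moreover have "(majorant_antideriv c has_real_derivative majorant (c * sin \<psi>)) (at \<psi>)"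
    if "\<psi> \<in> {?a<..<pi - ?a}" for \<psi>
    using one_less_mult_sin[OF c] that by (intro DERIV_majorant_antideriv[OF c]) auto
  ultimately have "((\<lambda>\<psi>. majorant (c * sin \<psi>)) has_integral
                     majorant_antideriv c (pi - ?a) - majorant_antideriv c ?a) {?a..pi - ?a}"
    by (intro fundamental_theorem_of_calculus_interior)
       (auto simp: has_real_derivative_iff_has_vector_derivative)
  moreover have "majorant_antideriv c (pi - ?a) - majorant_antideriv c ?a
                   = pi - 2 * ?a + pi * (58/100 / c + 15/100 / c^3)"
    by (simp add: majorant_antideriv_endpoints[OF c])
  ultimately show ?thesis by simp
qed

lemma integrable_integral_le_if_dominated:
  fixes f g :: "real \<Rightarrow> real"
  assumes cont: "\<And>x. x \<in> {a<..<b} \<Longrightarrow> isCont f x"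
    and dom: "\<And>x. x \<in> {a<..<b} \<Longrightarrow> \<bar>f x\<bar> \<le> g x"
    and g: "(g has_integral I) {a..b}"
  shows "f integrable_on {a..b}" and "integral {a..b} f \<le> I"
proof -
  have meas: "f \<in> borel_measurable (lebesgue_on {a<..<b})"
    by (rule continuous_imp_measurable_on_sets_lebesgue)
       (auto intro!: continuous_at_imp_continuous_on cont)
  have g': "(g has_integral I) {a<..<b}" using g has_integral_Icc_iff_Ioo by blast
  have f': "f integrable_on {a<..<b}"
    by (rule measurable_bounded_by_integrable_imp_integrable_real[OF meas _ dom])
       (use g' in auto)
  then show "f integrable_on {a..b}" using integrable_on_Icc_iff_Ioo by blast
  have "integral {a<..<b} f \<le> I"
    by (rule has_integral_le[OF integrable_integral[OF f'] g']) (use dom in force)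
  then show "integral {a..b} f \<le> I" by (simp add: integral_open_interval_real)
qed

theorem mainTheorem10:
  fixes c :: real
  assumes "c > 1"
  shows "(\<lambda>\<psi>. 1 / (1 - (Rminus (c * sin \<psi>))^2))
           integrable_on {arcsin (1/c) .. pi - arcsin (1/c)}
         \<and> DeltaTheta_MN c < pi"
proof -
  let ?a = "arcsin (1/c)"
  let ?f = "\<lambda>\<psi>. 1 / (1 - (Rminus (c * sin \<psi>))^2)"
  have inner: "1 < c * sin \<psi>" if "\<psi> \<in> {?a<..<pi - ?a}" for \<psi>
    using one_less_mult_sin[OF assms] that by auto
  have cont: "isCont ?f \<psi>" if "\<psi> \<in> {?a<..<pi - ?a}" for \<psi>
    by (rule isCont_o2[where f = "\<lambda>\<psi>. c * sin \<psi>", OF _ isCont_DeltaTheta_integrand[OF inner[OF that]]])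
       (intro continuous_intros)
  have dom: "\<bar>?f \<psi>\<bar> \<le> majorant (c * sin \<psi>)" if "\<psi> \<in> {?a<..<pi - ?a}" for \<psi>
    using Rminus_le_majorant[OF inner[OF that]] by simp
  have "integral {?a..pi - ?a} ?f \<le> pi - 2 * ?a + pi * (58/100 / c + 15/100 / c^3)"
   and "?f integrable_on {?a..pi - ?a}"
    using integrable_integral_le_if_dominated[OF cont dom majorant_has_integral[OF assms]] by auto
  moreover have "pi * (58/100 / c + 15/100 / c^3) < 2 * ?a"
    using pi_mult_less_2_arcsin[of "1/c"] assms by (simp add: power_divide)
  ultimately show ?thesis unfolding DeltaTheta_MN_def by linarith
qed

end
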